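(* Let $V$ be a set of $n$ points in $\mathbb{R}^2$, $O\in\mathbb{R}^2$, and $M,k$ positive integers. Sort $V$ as $u_1,\dots,u_n$ with $\theta(u_1)\le\cdots\le\theta(u_n)$, and for $1\le i\le\lceil n/(Mk)\rceil$ let $V_i=\{u_j:(i-1)Mk<j\le iMk\}$. Define $Y_i$ as follows: if $\max_{v\in V_i}\theta(v)-\min_{v\in V_i}\theta(v)\le\pi$, let $Y_i$ be the interior of the convex hull of $V_i\cup\{O\}$; otherwise let $Y_i$ be the exterior of the convex hull of $(V\setminus V_i)\cup\{O\}$. Then for any $1\le i<j\le\lceil n/(Mk)\rceil$, the sets $Y_i$ and $Y_j$ do not intersect.
   Context: $\theta(v)\in[0,2\pi)$ denotes the polar angle of the point $v$ with respect to $O$. *)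

theory Defs
  imports "HOL-Analysis.Analysis"
begin

text \<open>The plane R^2 is modelled as the type complex. Polar angle of v with
respect to the origin point c (O in the paper), normalised to [0, 2*pi). (For v = c this gives 0, since Arg 0 = 0.)\<close>
definition theta :: "complex \<Rightarrow> complex \<Rightarrow> real" where
  "theta c v = (if Arg (v - c) < 0 then Arg (v - c) + 2 * pi else Arg (v - c))"

definition block :: "(nat \<Rightarrow> complex) \<Rightarrow> nat \<Rightarrow> nat \<Rightarrow> nat \<Rightarrow> nat \<Rightarrow> complex set" where
  "block u n M k i = u ` {j. 1 \<le> j \<and> j \<le> n \<and> (i - 1) * M * k < j \<and> j \<le> i * M * k}"

text \<open>The region Y_i; the exterior of a set is the complement of its closure.\<close>
definition Yset :: "complex set \<Rightarrow> complex \<Rightarrow> (nat \<Rightarrow> complex) \<Rightarrow> nat \<Rightarrow> nat \<Rightarrow> nat \<Rightarrow> nat \<Rightarrow> complex set" where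
  "Yset V c u n M k i =
    (let Vi = block u n M k i in
     if (MAX v\<in>Vi. theta c v) - (MIN v\<in>Vi. theta c v) \<le> pi
     then interior (convex hull (Vi \<union> {c}))
     else - closure (convex hull ((V - Vi) \<union> {c})))"

end

(* Consecutive blocks of the angular order occupy disjoint consecutive intervals of
   [0, 2*pi), so at most one of two blocks spans an angle larger than pi.  If neither
   does, some line through O has the first block on one side and the second block on
   the other; the convex hulls of V_i and of V_j together with O then lie in opposite
   closed half-planes and their interiors are disjoint.  If one block spans more than
   pi, its region is the exterior of a convex hull containing the other block's hull. *)

theory Submission
  imports Defs
begin

lemma theta_bounds: "0 \<le> theta c v" "theta c v < 2 * pi"
  using Arg_bounded[of "v - c"] by (auto simp: theta_def)

lemma rcis_theta: "rcis (cmod (v - c)) (theta c v) = v - c"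
proof -
  have "cis (theta c v) = cis (Arg (v - c))"
    by (simp add: theta_def cis.ctr complex_eq_iff)
  then show ?thesis
    using rcis_cmod_Arg[of "v - c"] by (simp add: rcis_def)
qed

lemma inner_i_cis_diff: "(\<i> * cis p) \<bullet> (v - c) = cmod (v - c) * sin (theta c v - p)"
proof -
  have "(\<i> * cis p) \<bullet> (v - c) = (\<i> * cis p) \<bullet> rcis (cmod (v - c)) (theta c v)"
    by (simp only: rcis_theta)
  also have "\<dots> = cmod (v - c) * sin (theta c v - p)"
    by (simp add: rcis_def inner_complex_def sin_diff algebra_simps)
  finally show ?thesis .
qed

lemma convex_hull_subset_halfplane:
  assumes "\<And>v. v \<in> A \<Longrightarrow> 0 \<le> sin (theta c v - p)"
  shows "convex hull (A \<union> {c}) \<subseteq> {x. (\<i> * cis p) \<bullet> x \<ge> (\<i> * cis p) \<bullet> c}"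
proof (rule hull_minimal)
  have "(\<i> * cis p) \<bullet> (v - c) \<ge> 0" if "v \<in> A" for v
    using assms[OF that] by (simp add: inner_i_cis_diff)
  then show "A \<union> {c} \<subseteq> {x. (\<i> * cis p) \<bullet> x \<ge> (\<i> * cis p) \<bullet> c}"
    by (auto simp: inner_diff_right)
qed (rule convex_halfspace_ge)

lemma interiors_convex_hull_disjoint:
  assumes "\<And>v. v \<in> A \<Longrightarrow> 0 \<le> sin (theta c v - p)"
    and "\<And>w. w \<in> B \<Longrightarrow> sin (theta c w - p) \<le> 0"
  shows "interior (convex hull (A \<union> {c})) \<inter> interior (convex hull (B \<union> {c})) = {}"
proof -
  define d where "d = \<i> * cis p"
  have "d \<noteq> 0"
    by (simp add: d_def)
  have "convex hull (A \<union> {c}) \<subseteq> {x. d \<bullet> x \<ge> d \<bullet> c}"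
    using convex_hull_subset_halfplane[of A c p] assms(1) by (simp add: d_def)
  then have "interior (convex hull (A \<union> {c})) \<subseteq> interior {x. d \<bullet> x \<ge> d \<bullet> c}"
    by (rule interior_mono)
  then have A: "interior (convex hull (A \<union> {c})) \<subseteq> {x. d \<bullet> x > d \<bullet> c}"
    using \<open>d \<noteq> 0\<close> by simp
  have "\<i> * cis (p + pi) = - d"
    by (simp add: d_def cis_mult[symmetric])
  moreover have "0 \<le> sin (theta c w - (p + pi))" if "w \<in> B" for w
    using assms(2)[OF that] by (simp add: diff_diff_eq[symmetric])
  ultimately have "convex hull (B \<union> {c}) \<subseteq> {x. (- d) \<bullet> x \<ge> (- d) \<bullet> c}"
    using convex_hull_subset_halfplane[of B c "p + pi"] by simp
  then have "interior (convex hull (B \<union> {c})) \<subseteq> interior {x. (- d) \<bullet> x \<ge> (- d) \<bullet> c}"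
    by (rule interior_mono)
  then have B: "interior (convex hull (B \<union> {c})) \<subseteq> {x. d \<bullet> x < d \<bullet> c}"
    using \<open>d \<noteq> 0\<close> by simp
  show ?thesis
    using A B by force
qed

definition angular_span :: "complex \<Rightarrow> complex set \<Rightarrow> real" where
  "angular_span c A = (MAX v\<in>A. theta c v) - (MIN v\<in>A. theta c v)"

definition region :: "complex set \<Rightarrow> complex \<Rightarrow> complex set \<Rightarrow> complex set" where
  "region V c A =
    (if angular_span c A \<le> pi then interior (convex hull (A \<union> {c}))
     else - closure (convex hull ((V - A) \<union> {c})))"

lemma Min_theta_nonneg: "finite A \<Longrightarrow> A \<noteq> {} \<Longrightarrow> 0 \<le> (MIN v\<in>A. theta c v)"
  using Min_in[of "theta c ` A"] theta_bounds by auto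

lemma Max_theta_less: "finite A \<Longrightarrow> A \<noteq> {} \<Longrightarrow> (MAX v\<in>A. theta c v) < 2 * pi"
  using Max_in[of "theta c ` A"] theta_bounds by auto

lemma Max_theta_le_Min_theta:
  assumes "finite A" "A \<noteq> {}" "finite B" "B \<noteq> {}"
    and "\<And>v w. v \<in> A \<Longrightarrow> w \<in> B \<Longrightarrow> theta c v \<le> theta c w"
  shows "(MAX v\<in>A. theta c v) \<le> (MIN w\<in>B. theta c w)"
  using assms by simp

lemma angular_span_add_less:
  assumes "finite A" "A \<noteq> {}" "finite B" "B \<noteq> {}"
    and "\<And>v w. v \<in> A \<Longrightarrow> w \<in> B \<Longrightarrow> theta c v \<le> theta c w"
  shows "angular_span c A + angular_span c B < 2 * pi"
  using Max_theta_le_Min_theta[OF assms] Min_theta_nonneg[OF assms(1,2), of c]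
    Max_theta_less[OF assms(3,4), of c]
  unfolding angular_span_def by linarith

lemma separating_direction:
  assumes "finite A" "A \<noteq> {}" "finite B" "B \<noteq> {}"
    and "\<And>v w. v \<in> A \<Longrightarrow> w \<in> B \<Longrightarrow> theta c v \<le> theta c w"
    and "angular_span c A \<le> pi" "angular_span c B \<le> pi"
  obtains p where "\<And>v. v \<in> A \<Longrightarrow> 0 \<le> sin (theta c v - p)"
    and "\<And>w. w \<in> B \<Longrightarrow> sin (theta c w - p) \<le> 0"
proof
  define minA where "minA = (MIN v\<in>A. theta c v)"
  define maxA where "maxA = (MAX v\<in>A. theta c v)"
  define minB where "minB = (MIN v\<in>B. theta c v)"
  define maxB where "maxB = (MAX v\<in>B. theta c v)"
  have spans: "maxA - minA \<le> pi" "maxB - minB \<le> pi"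
    using assms(6,7) by (simp_all add: angular_span_def minA_def maxA_def minB_def maxB_def)
  have "0 \<le> minA" "maxA \<le> minB" "maxB < 2 * pi"
    using Min_theta_nonneg[OF assms(1,2), of c] Max_theta_le_Min_theta[OF assms(1-5)]
      Max_theta_less[OF assms(3,4), of c]
    by (simp_all add: minA_def maxA_def minB_def maxB_def)
  \<comment> \<open>Angles of A then lie in [p, p + pi] and angles of B in [p + pi, p + 2 * pi].\<close>
  define p where "p = min minA (minB - pi)"
  show "0 \<le> sin (theta c v - p)" if "v \<in> A" for v
  proof (rule sin_ge_zero)
    have "minA \<le> theta c v" "theta c v \<le> maxA"
      using that assms(1) by (simp_all add: minA_def maxA_def)
    then show "0 \<le> theta c v - p" "theta c v - p \<le> pi"
      using spans \<open>maxA \<le> minB\<close> by (auto simp: p_def)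
  qed
  show "sin (theta c w - p) \<le> 0" if "w \<in> B" for w
  proof -
    have "minB \<le> theta c w" "theta c w \<le> maxB"
      using that assms(3) by (simp_all add: minB_def maxB_def)
    then have "pi \<le> theta c w - p" "theta c w - p \<le> 2 * pi"
      using spans \<open>0 \<le> minA\<close> \<open>maxB < 2 * pi\<close> by (auto simp: p_def)
    then show ?thesis
      using sin_le_zero[of "theta c w - p"] by (cases "theta c w - p = 2 * pi") auto
  qed
qed

lemma interior_convex_hull_disjoint_exterior:
  assumes "A \<subseteq> V - B"
  shows "interior (convex hull (A \<union> {c})) \<inter> - closure (convex hull ((V - B) \<union> {c})) = {}"
proof -
  have "convex hull (A \<union> {c}) \<subseteq> convex hull ((V - B) \<union> {c})"
    using assms by (intro hull_mono) blast
  then show ?thesis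
    using interior_subset closure_subset by blast
qed

lemma region_disjoint:
  assumes "finite A" "A \<noteq> {}" "finite B" "B \<noteq> {}"
    and "\<And>v w. v \<in> A \<Longrightarrow> w \<in> B \<Longrightarrow> theta c v \<le> theta c w"
    and "A \<subseteq> V - B" "B \<subseteq> V - A"
  shows "region V c A \<inter> region V c B = {}"
proof (cases "angular_span c A \<le> pi"; cases "angular_span c B \<le> pi")
  assume "angular_span c A \<le> pi" "angular_span c B \<le> pi"
  then obtain p where "\<And>v. v \<in> A \<Longrightarrow> 0 \<le> sin (theta c v - p)"
    and "\<And>w. w \<in> B \<Longrightarrow> sin (theta c w - p) \<le> 0"
    using separating_direction[OF assms(1-5)] by blast
  then have "interior (convex hull (A \<union> {c})) \<inter> interior (convex hull (B \<union> {c})) = {}"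
    by (rule interiors_convex_hull_disjoint)
  then show ?thesis
    using \<open>angular_span c A \<le> pi\<close> \<open>angular_span c B \<le> pi\<close> by (simp add: region_def)
next
  assume "angular_span c A \<le> pi" "\<not> angular_span c B \<le> pi"
  then show ?thesis
    using interior_convex_hull_disjoint_exterior[OF assms(6)] by (simp add: region_def)
next
  assume "\<not> angular_span c A \<le> pi" "angular_span c B \<le> pi"
  then show ?thesis
    using interior_convex_hull_disjoint_exterior[OF assms(7)] by (auto simp: region_def)
next
  assume "\<not> angular_span c A \<le> pi" "\<not> angular_span c B \<le> pi"
  then show ?thesis
    using angular_span_add_less[OF assms(1-5)] by simp
qed

lemma Yset_eq_region: "Yset V c u n M k i = region V c (block u n M k i)"
  by (simp add: Yset_def region_def angular_span_def Let_def)

lemma finite_block: "finite (block u n M k i)"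
  by (simp add: block_def)

lemma block_subset: "block u n M k i \<subseteq> u ` {1..n}"
  by (auto simp: block_def)

lemma block_nonempty:
  assumes "M > 0" "k > 0" "1 \<le> i" "i \<le> nat \<lceil>real n / real (M * k)\<rceil>"
  shows "block u n M k i \<noteq> {}"
proof -
  have "int i \<le> \<lceil>real n / real (M * k)\<rceil>"
    using assms(3,4) by linarith
  then have "real (i - 1) < real n / real (M * k)"
    using assms(3) by (simp add: le_ceiling_iff)
  then have "real ((i - 1) * (M * k)) < real n"
    using assms(1,2) by (simp add: less_divide_eq)
  then have "(i - 1) * M * k + 1 \<le> n"
    by (simp only: of_nat_less_iff mult.assoc)
  moreover have "(i - 1) * M * k + 1 \<le> i * M * k"
  proof -
    have "(i - 1) * M * k + 1 \<le> (i - 1) * M * k + M * k"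
      using assms(1,2) by simp
    also have "\<dots> = i * M * k"
      using assms(3) by (cases i) (simp_all add: algebra_simps)
    finally show ?thesis .
  qed
  ultimately have "u ((i - 1) * M * k + 1) \<in> block u n M k i"
    by (auto simp: block_def)
  then show ?thesis
    by blast
qed

lemma theta_block_mono:
  assumes mono: "\<And>a b. 1 \<le> a \<Longrightarrow> a \<le> b \<Longrightarrow> b \<le> n \<Longrightarrow> theta c (u a) \<le> theta c (u b)"
    and "i < j" "v \<in> block u n M k i" "w \<in> block u n M k j"
  shows "theta c v \<le> theta c w"
proof -
  obtain a where a: "v = u a" "1 \<le> a" "a \<le> i * M * k"
    using assms(3) by (auto simp: block_def)
  obtain b where b: "w = u b" "(j - 1) * M * k < b" "b \<le> n"
    using assms(4) by (auto simp: block_def)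
  have "i * M * k \<le> (j - 1) * M * k"
    using \<open>i < j\<close> by (intro mult_le_mono1) simp
  then have "a \<le> b"
    using a b by linarith
  then show ?thesis
    using mono[OF \<open>1 \<le> a\<close> _ \<open>b \<le> n\<close>] a(1) b(1) by simp
qed

lemma block_disjoint:
  assumes "inj_on u {1..n}" "i < j"
  shows "block u n M k i \<inter> block u n M k j = {}"
proof (rule ccontr)
  assume "block u n M k i \<inter> block u n M k j \<noteq> {}"
  then obtain a b where ab: "u a = u b" "a \<in> {1..n}" "b \<in> {1..n}"
    and "a \<le> i * M * k" "(j - 1) * M * k < b"
    by (auto simp: block_def)
  have "i * M * k \<le> (j - 1) * M * k"
    using \<open>i < j\<close> by (intro mult_le_mono1) simp
  then have "a \<noteq> b"
    using \<open>a \<le> i * M * k\<close> \<open>(j - 1) * M * k < b\<close> by linarith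
  then show False
    using inj_onD[OF assms(1) ab] by blast
qed

theorem lemma12:
  fixes V :: "complex set" and c :: complex and M k n i j :: nat and u :: "nat \<Rightarrow> complex"
  assumes "finite V" and "card V = n"
    and "M > 0" and "k > 0"
    and "bij_betw u {1..n} V"
    and "\<And>a b. 1 \<le> a \<Longrightarrow> a \<le> b \<Longrightarrow> b \<le> n \<Longrightarrow> theta c (u a) \<le> theta c (u b)"
    and "1 \<le> i" and "i < j" and "j \<le> nat \<lceil>real n / real (M * k)\<rceil>"
  shows "Yset V c u n M k i \<inter> Yset V c u n M k j = {}"
proof -
  have "inj_on u {1..n}" "u ` {1..n} = V"
    using assms(5) by (auto simp: bij_betw_def)
  then have "block u n M k i \<subseteq> V - block u n M k j" "block u n M k j \<subseteq> V - block u n M k i"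
    using block_subset[of u n M k] block_disjoint[of u n i j M k] \<open>i < j\<close> by blast+
  moreover have "block u n M k i \<noteq> {}" "block u n M k j \<noteq> {}"
    using block_nonempty[OF assms(3,4)] assms(7-9) by simp_all
  ultimately show ?thesis
    unfolding Yset_eq_region
    by (intro region_disjoint finite_block theta_block_mono[OF assms(6) \<open>i < j\<close>])
qed

end
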